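(* For each random forest with majority voting there exists an equivalent boosted tree ensemble (i.e., one computing the same classification function) whose size is polynomial in the size of the starting random forest.
   Context: Features $\mathcal{F}$ with domains $D_i$, feature space $\mathbb{F}=\prod_i D_i$, finite class set $\mathcal{K}$. A decision tree is a binary rooted tree with internal nodes labeled by split conditions $x_i<d$; each point reaches a unique leaf. A random forest with majority voting has leaves labeled by classes and predicts the class voted by the largest number of trees. A boosted tree ensemble consists of decision trees partitioned into groups, one per class, each leaf carrying a real weight; the score of a class at $\mathbf{x}$ is the sum of the weights of the leaves reached by $\mathbf{x}$ in the trees of that class's group, and the prediction is a class of maximal score. Size is measured as the total number of tree nodes. *)

theory Defs
  imports Main "HOL-Computational_Algebra.Polynomial"
begin

datatype ('f, 'v, 'l) dtree =
    Leaf 'l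
  | Node 'f 'v "('f, 'v, 'l) dtree" "('f, 'v, 'l) dtree"

fun dt_eval :: "('f, 'v::linorder, 'l) dtree \<Rightarrow> ('f \<Rightarrow> 'v) \<Rightarrow> 'l" where
  "dt_eval (Leaf c) x = c"
| "dt_eval (Node i d l r) x = (if x i < d then dt_eval l x else dt_eval r x)"

fun dt_size :: "('f, 'v, 'l) dtree \<Rightarrow> nat" where
  "dt_size (Leaf c) = 1"
| "dt_size (Node i d l r) = 1 + dt_size l + dt_size r"

fun dt_leaves :: "('f, 'v, 'l) dtree \<Rightarrow> 'l set" where
  "dt_leaves (Leaf c) = {c}"
| "dt_leaves (Node i d l r) = dt_leaves l \<union> dt_leaves r"

definition feature_space :: "('f \<Rightarrow> 'v set) \<Rightarrow> ('f \<Rightarrow> 'v) set" where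
  "feature_space D = {x. \<forall>i. x i \<in> D i}"

type_synonym ('f, 'v, 'k) rforest = "('f, 'v, 'k) dtree list"

definition rf_votes :: "('f, 'v::linorder, 'k) rforest \<Rightarrow> ('f \<Rightarrow> 'v) \<Rightarrow> 'k \<Rightarrow> nat" where
  "rf_votes F x k = length (filter (\<lambda>t. dt_eval t x = k) F)"

definition rf_classify :: "'k set \<Rightarrow> ('f, 'v::linorder, 'k) rforest \<Rightarrow> ('f \<Rightarrow> 'v) \<Rightarrow> 'k set" where
  "rf_classify K F x = {k \<in> K. \<forall>k' \<in> K. rf_votes F x k' \<le> rf_votes F x k}"

definition rf_size :: "('f, 'v, 'k) rforest \<Rightarrow> nat" where
  "rf_size F = (\<Sum>t\<leftarrow>F. dt_size t)"

definition rf_wf :: "'k set \<Rightarrow> ('f, 'v, 'k) rforest \<Rightarrow> bool" where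
  "rf_wf K F \<longleftrightarrow> (\<forall>t \<in> set F. dt_leaves t \<subseteq> K)"

type_synonym ('f, 'v, 'k) bensemble = "'k \<Rightarrow> ('f, 'v, real) dtree list"

definition bt_score :: "('f, 'v::linorder, 'k) bensemble \<Rightarrow> ('f \<Rightarrow> 'v) \<Rightarrow> 'k \<Rightarrow> real" where
  "bt_score B x k = (\<Sum>t\<leftarrow>B k. dt_eval t x)"

definition bt_classify :: "'k set \<Rightarrow> ('f, 'v::linorder, 'k) bensemble \<Rightarrow> ('f \<Rightarrow> 'v) \<Rightarrow> 'k set" where
  "bt_classify K B x = {k \<in> K. \<forall>k' \<in> K. bt_score B x k' \<le> bt_score B x k}"

definition bt_wf :: "'k set \<Rightarrow> ('f, 'v, 'k) bensemble \<Rightarrow> bool" where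
  "bt_wf K B \<longleftrightarrow> (\<forall>k. k \<notin> K \<longrightarrow> B k = [])"

definition bt_size :: "'k set \<Rightarrow> ('f, 'v, 'k) bensemble \<Rightarrow> nat" where
  "bt_size K B = (\<Sum>k\<in>K. \<Sum>t\<leftarrow>B k. dt_size t)"

end

theory Submission
  imports Defs
begin

text \<open>Replace the class labels of each tree by the indicator weights of a class k. The score of
  k in the resulting boosted ensemble is then exactly the number of votes for k, so both
  ensembles classify identically. Only classes occurring as leaves get a nonempty group, so the
  size is at most (number of leaf classes) times (forest size), hence at most the forest size squared.\<close>

fun dt_indicator :: "'k \<Rightarrow> ('f, 'v, 'k) dtree \<Rightarrow> ('f, 'v, real) dtree" where
  "dt_indicator k (Leaf c) = Leaf (if c = k then 1 else 0)"
| "dt_indicator k (Node i d l r) = Node i d (dt_indicator k l) (dt_indicator k r)"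

lemma dt_size_dt_indicator [simp]: "dt_size (dt_indicator k t) = dt_size t"
  by (induction t) auto

lemma dt_eval_dt_indicator: "dt_eval (dt_indicator k t) x = (if dt_eval t x = k then 1 else 0)"
  by (induction t) auto

lemma dt_eval_in_dt_leaves: "dt_eval t x \<in> dt_leaves t"
  by (induction t) auto

lemma finite_dt_leaves [simp]: "finite (dt_leaves t)"
  by (induction t) auto

lemma card_dt_leaves_le_dt_size: "card (dt_leaves t) \<le> dt_size t"
  by (induction t) (auto intro: order_trans[OF card_Un_le])

definition rf_leaves :: "('f, 'v, 'k) rforest \<Rightarrow> 'k set" where
  "rf_leaves F = (\<Union>t\<in>set F. dt_leaves t)"

lemma finite_rf_leaves: "finite (rf_leaves F)"
  by (simp add: rf_leaves_def)

lemma card_rf_leaves_le_rf_size: "card (rf_leaves F) \<le> rf_size F"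
proof (induction F)
  case Nil
  then show ?case by (simp add: rf_leaves_def rf_size_def)
next
  case (Cons t F)
  have "card (rf_leaves (t # F)) \<le> card (dt_leaves t) + card (rf_leaves F)"
    by (simp add: rf_leaves_def card_Un_le)
  also have "\<dots> \<le> dt_size t + rf_size F"
    using Cons card_dt_leaves_le_dt_size add_mono by blast
  finally show ?case by (simp add: rf_size_def)
qed

lemma rf_leaves_subset: "rf_wf K F \<Longrightarrow> rf_leaves F \<subseteq> K"
  by (auto simp: rf_wf_def rf_leaves_def)

definition bt_of_rf :: "('f, 'v, 'k) rforest \<Rightarrow> ('f, 'v, 'k) bensemble" where
  "bt_of_rf F = (\<lambda>k. if k \<in> rf_leaves F then map (dt_indicator k) F else [])"

lemma bt_wf_bt_of_rf: "rf_wf K F \<Longrightarrow> bt_wf K (bt_of_rf F)"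
  using rf_leaves_subset by (fastforce simp: bt_wf_def bt_of_rf_def)

lemma rf_votes_eq_0: "k \<notin> rf_leaves F \<Longrightarrow> rf_votes F x k = 0"
  using dt_eval_in_dt_leaves by (fastforce simp: rf_votes_def rf_leaves_def filter_empty_conv)

lemma bt_score_bt_of_rf: "bt_score (bt_of_rf F) x k = real (rf_votes F x k)"
proof (cases "k \<in> rf_leaves F")
  case True
  have "(\<Sum>t\<leftarrow>F. dt_eval (dt_indicator k t) x) = real (length (filter (\<lambda>t. dt_eval t x = k) F))"
    by (induction F) (auto simp: dt_eval_dt_indicator)
  then show ?thesis
    using True by (simp add: bt_score_def bt_of_rf_def rf_votes_def o_def)
next
  case False
  then show ?thesis by (simp add: bt_score_def bt_of_rf_def rf_votes_eq_0)
qed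

lemma bt_classify_bt_of_rf: "bt_classify K (bt_of_rf F) x = rf_classify K F x"
  by (simp add: bt_classify_def rf_classify_def bt_score_bt_of_rf)

lemma bt_size_bt_of_rf: "bt_size K (bt_of_rf F) \<le> rf_size F ^ 2"
proof (cases "finite K")
  case True
  have group_size: "sum_list (map (dt_size \<circ> dt_indicator k) F) = rf_size F" for k
    by (induction F) (auto simp: rf_size_def)
  have "bt_size K (bt_of_rf F) = (\<Sum>k\<in>K. if k \<in> rf_leaves F then rf_size F else 0)"
    unfolding bt_size_def bt_of_rf_def by (intro sum.cong) (auto simp: group_size)
  also have "\<dots> = card (K \<inter> rf_leaves F) * rf_size F"
    using True by (simp flip: sum.inter_restrict)
  also have "\<dots> \<le> card (rf_leaves F) * rf_size F"
    by (simp add: card_mono finite_rf_leaves)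
  also have "\<dots> \<le> rf_size F ^ 2"
    by (simp add: card_rf_leaves_le_rf_size power2_eq_square)
  finally show ?thesis .
next
  case False
  then show ?thesis by (simp add: bt_size_def)
qed

theorem mainTheorem4:
  "\<exists>p :: nat poly. \<forall>(K :: 'k set) (D :: 'f \<Rightarrow> 'v::linorder set) (F :: ('f, 'v, 'k) rforest).
     finite K \<and> K \<noteq> {} \<and> rf_wf K F \<longrightarrow>
     (\<exists>B :: ('f, 'v, 'k) bensemble.
        bt_wf K B \<and>
        bt_size K B \<le> poly p (rf_size F) \<and>
        (\<forall>x \<in> feature_space D. bt_classify K B x = rf_classify K F x))"
proof (intro exI[of _ "monom 1 2"] allI impI)
  fix K :: "'k set" and D :: "'f \<Rightarrow> 'v::linorder set" and F :: "('f, 'v, 'k) rforest"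
  assume "finite K \<and> K \<noteq> {} \<and> rf_wf K F"
  then have "bt_wf K (bt_of_rf F)"
    by (simp add: bt_wf_bt_of_rf)
  moreover have "bt_size K (bt_of_rf F) \<le> poly (monom 1 2) (rf_size F)"
    by (simp add: poly_monom bt_size_bt_of_rf)
  ultimately show "\<exists>B. bt_wf K B \<and> bt_size K B \<le> poly (monom 1 2) (rf_size F) \<and>
      (\<forall>x \<in> feature_space D. bt_classify K B x = rf_classify K F x)"
    by (auto simp: bt_classify_bt_of_rf)
qed

end
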